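(* Let an extended spinor connection on $N$ be given, with spatial covariant differentiation $\nabla$. Let $P\in\{1,\dots,J\}$, let $\mathbf X$ be an extended vector field (components $X^j$) and $\mathbf Y$ an extended spin-tensorial field of type $(\alpha_P,\beta_P|\nu_P,\gamma_P|m_P,n_P)$. Define extended fields $\mathfrak N^+$ (type $(1,1|0,0|0,0)$), $\bar{\mathfrak N}^+$ (type $(0,0|1,1|0,0)$), $\mathbf N^+$ (type $(0,0|0,0|1,1)$) by $$(\mathfrak N^+)^k_i=-\sum_{j=0}^3\sum_{I,J}X^jY^I_J\frac{\partial\mathrm A^k_{j\,i}}{\partial S[P]^I_J},\quad (\bar{\mathfrak N}^+)^k_i=-\sum_{j}\sum_{I,J}X^jY^I_J\frac{\partial\bar{\mathrm A}^k_{j\,i}}{\partial S[P]^I_J},\quad (\mathbf N^+)^k_i=-\sum_{j}\sum_{I,J}X^jY^I_J\frac{\partial\Gamma^k_{j\,i}}{\partial S[P]^I_J},$$ and for $Q=1,\dots,J$ put $\mathbf U[Q]=-D(\mathfrak N^+,\bar{\mathfrak N}^+,\mathbf N^+)\mathbf S[Q]$, $\bar{\mathbf U}[Q]=-D(\mathfrak N^+,\bar{\mathfrak N}^+,\mathbf N^+)\tau(\mathbf S[Q])$. Then, as operators on extended spin-tensorial fields of every type, $$[\nabla_{\mathbf X},\vec\nabla_{\mathbf Y}[P]]=\vec\nabla_{\mathbf U}[P]+\sum_{Q=1}^J\vec\nabla_{\mathbf U[Q]}[Q]+\sum_{Q=1}^J\bar{\vec\nabla}_{\bar{\mathbf U}[Q]}[Q]-\nabla_{\mathbf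 V}+D(\mathfrak N^+,\bar{\mathfrak N}^+,\mathbf N^+),$$ where $\mathbf U=\nabla_{\mathbf X}\mathbf Y$ and $\mathbf V=\vec\nabla_{\mathbf Y}[P]\mathbf X$.
   Context: Setting. $M$ is a 4-dimensional oriented, time-polarized space-time manifold with metric of signature $(+,-,-,-)$, with a spinor bundle $SM$. An equipped local chart has coordinates $x^0,\dots,x^3$, a spinor frame $\Psi_1,\Psi_2$ and associated tangent frame $\Upsilon_i=\sum_k\Upsilon^k_i\partial/\partial x^k$ ($i=0,..,3$); $c^k_{ij}$ are defined by $[\Upsilon_i,\Upsilon_j]=\sum_kc^k_{ij}\Upsilon_k$. A spin-tensor of type $(\alpha,\beta|\nu,\gamma|m,n)$ has components $X^{i_1\dots i_\alpha\bar i_1\dots\bar i_\nu h_1\dots h_m}_{j_1\dots j_\beta\bar j_1\dots\bar j_\gamma k_1\dots k_n}$ (spinor indices in $\{1,2\}$, tensor indices in $\{0,..,3\}$). The semilinear map $\tau$ sends type $(\alpha,\beta|\nu,\gamma|m,n)$ to $(\nu,\gamma|\alpha,\beta|m,n)$ by $\tau(S)^{i_1\dots i_\nu\bar i_1\dots\bar i_\alpha h}_{j_1\dots j_\gamma\bar j_1\dots\bar j_\beta k}=\overline{S^{\bar i_1\dots\bar i_\alpha i_1\dots i_\nu h}_{\bar j_1\dots\bar j_\beta j_1\dots j_\gamma k}}$. Composite bundle. Fix types $(\alpha_P,\beta_P|\nu_P,\gamma_P|m_P,n_P)$, $P=1,\dots,J$; $N$ is the direct sum of the corresponding spin-tensor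 bundles, a point being $q=(p,\mathbf S[1],\dots,\mathbf S[J])$; local coordinates $x^0,..,x^3$ and the components of all $\mathbf S[P]$. An extended spin-tensorial field of a type assigns smoothly to each $q$ a spin-tensor of that type at $\pi(q)$; components are functions of $x$, the components of the $\mathbf S[P]$ and their conjugates. $\partial/\partial S[P]^I_J$ and $\partial/\partial\tau(S[P])^{I'}_{J'}$ are Wirtinger derivatives. $\mathbf S[Q]$ and $\tau(\mathbf S[Q])$ are themselves extended fields. Native multivariate differentiations. For $\mathbf Y$ of type $(\alpha_P,\beta_P|\nu_P,\gamma_P|m_P,n_P)$: $\vec\nabla_{\mathbf Y}[P]\mathbf Z=\sum_{I,J}Y^I_J\,\partial\mathbf Z/\partial S[P]^I_J$; for $\mathbf Y$ of type $(\nu_P,\gamma_P|\alpha_P,\beta_P|m_P,n_P)$: $\bar{\vec\nabla}_{\mathbf Y}[P]\mathbf Z=\sum_{I',J'}Y^{I'}_{J'}\,\partial\mathbf Z/\partial\tau(S[P])^{I'}_{J'}$ (componentwise in $\mathbf Z$). Algebraic action and degenerate differentiation. For $2\times2$ matrix functions $a,b$, $4\times4$ matrix function $g$, and $X$ of type $(\varepsilon,\eta|\sigma,\zeta|e,f)$, $L(a,b,g)X$ has components $\sum_{\mu\le\varepsilon}\sum_v a^{a_\mu}_vX^{\dots v\dots}-\sum_{\mu\le\eta}\sum_w a^w_{b_\mu}X_{\dots w\dots}+\sum_{\mu\le\sigma}\sum_v b^{\bar a_\mu}_vX^{\dots v\dots}-\sum_{\mu\le\zeta}\sum_w b^w_{\bar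 b_\mu}X_{\dots w\dots}+\sum_{\mu\le e}\sum_v g^{c_\mu}_vX^{\dots v\dots}-\sum_{\mu\le f}\sum_w g^w_{d_\mu}X_{\dots w\dots}$ (the $\mu$-th index of the respective group replaced by the summation index). For $\mathfrak S$ of type $(1,1|0,0|0,0)$, $\bar{\mathfrak S}$ of type $(0,0|1,1|0,0)$, $\mathbf S$ of type $(0,0|0,0|1,1)$: $D(\mathfrak S,\bar{\mathfrak S},\mathbf S)X:=L(\mathfrak S,\bar{\mathfrak S},\mathbf S)X$. Extended spinor connection and covariant differentiation. An extended spinor connection is given in each equipped chart by smooth functions (of $x$ and the $\mathbf S[P]$ components and conjugates) $\mathrm A^k_{j\,i}$, $\bar{\mathrm A}^k_{j\,i}$ ($k,i\in\{1,2\}$, $j\in\{0,..,3\}$) and $\Gamma^k_{j\,i}$ ($k,i,j\in\{0,..,3\}$), transforming between charts so that $\nabla$ below is chart-independent. With $L_j:=L(\mathrm A_j,\bar{\mathrm A}_j,\Gamma_j)$, $\mathrm A_j=(\mathrm A^k_{j\,i})_{k,i}$ etc.: $$\nabla_j\mathbf Z=\sum_k\Upsilon^k_j\frac{\partial\mathbf Z}{\partial x^k}-\sum_{P}\sum_{I,J}(L_j\mathbf S[P])^I_J\frac{\partial\mathbf Z}{\partial S[P]^I_J}-\sum_{P}\sum_{I',J'}(L_j\tau(\mathbf S[P]))^{I'}_{J'}\frac{\partial\mathbf Z}{\partial\tau(S[P])^{I'}_{J'}}+L_j\mathbf Z,$$ and $\nabla_{\mathbf X}\mathbf Z=\sum_jX^j\nabla_j\mathbf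 Z$ for an extended vector field $\mathbf X$ (type $(0,0|0,0|1,0)$). $[A,B]=AB-BA$. *)

theory Defs
  imports "HOL-Analysis.Analysis"
begin

text \<open>A type (alpha,beta|nu,gamma|m,n) is a 6-tuple of naturals, ordered as
 (upper unbarred spinor, lower unbarred spinor, upper barred spinor,
  lower barred spinor, upper tensor, lower tensor).\<close>
type_synonym sttype = "nat \<times> nat \<times> nat \<times> nat \<times> nat \<times> nat"

text \<open>A component index: six lists of indices in the same order.
 Spinor indices range over {1,2}, tensor indices over {0,..,3}.\<close>
type_synonym stidx = "nat list \<times> nat list \<times> nat list \<times> nat list \<times> nat list \<times> nat list"

definition sp_range :: "nat set" where "sp_range = {1,2}"
definition tn_range :: "nat set" where "tn_range = {0..3}"

fun idx :: "sttype \<Rightarrow> stidx set" where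
  "idx (\<alpha>, \<beta>, \<nu>, \<gamma>, m, n) =
     {(a, b, c, d, e, f). length a = \<alpha> \<and> set a \<subseteq> sp_range \<and>
                          length b = \<beta> \<and> set b \<subseteq> sp_range \<and>
                          length c = \<nu> \<and> set c \<subseteq> sp_range \<and>
                          length d = \<gamma> \<and> set d \<subseteq> sp_range \<and>
                          length e = m \<and> set e \<subseteq> tn_range \<and>
                          length f = n \<and> set f \<subseteq> tn_range}"

fun tauty :: "sttype \<Rightarrow> sttype" where
  "tauty (\<alpha>, \<beta>, \<nu>, \<gamma>, m, n) = (\<nu>, \<gamma>, \<alpha>, \<beta>, m, n)"

fun swapidx :: "stidx \<Rightarrow> stidx" where
  "swapidx (a, b, c, d, e, f) = (c, d, a, b, e, f)"

text \<open>Index of the component X^j of a vector (type (0,0|0,0|1,0)).\<close>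
definition vidx :: "nat \<Rightarrow> stidx" where
  "vidx j = ([], [], [], [], [j], [])"

definition tau_st :: "(stidx \<Rightarrow> complex) \<Rightarrow> stidx \<Rightarrow> complex" where
  "tau_st S I = cnj (S (swapidx I))"

type_synonym cmat = "nat \<Rightarrow> nat \<Rightarrow> complex"  \<comment> \<open>a k i = a^k_i\<close>

fun lop :: "cmat \<Rightarrow> cmat \<Rightarrow> cmat \<Rightarrow> (stidx \<Rightarrow> complex) \<Rightarrow> stidx \<Rightarrow> complex" where
  "lop a b g X (A, B, C, D, E, F) =
      (\<Sum>\<mu><length A. \<Sum>v\<in>sp_range. a (A!\<mu>) v * X (A[\<mu>:=v], B, C, D, E, F))
    - (\<Sum>\<mu><length B. \<Sum>w\<in>sp_range. a w (B!\<mu>) * X (A, B[\<mu>:=w], C, D, E, F))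
    + (\<Sum>\<mu><length C. \<Sum>v\<in>sp_range. b (C!\<mu>) v * X (A, B, C[\<mu>:=v], D, E, F))
    - (\<Sum>\<mu><length D. \<Sum>w\<in>sp_range. b w (D!\<mu>) * X (A, B, C, D[\<mu>:=w], E, F))
    + (\<Sum>\<mu><length E. \<Sum>v\<in>tn_range. g (E!\<mu>) v * X (A, B, C, D, E[\<mu>:=v], F))
    - (\<Sum>\<mu><length F. \<Sum>w\<in>tn_range. g w (F!\<mu>) * X (A, B, C, D, E, F[\<mu>:=w]))"

text \<open>A point of N over the chart: coordinates x in R^4 and the fibre coordinates,
 i.e. all components of S[1],...,S[J], collected in a complex vector indexed by a
 finite type 'c (in bijection with the set of pairs (P, I)).\<close>
type_synonym 'c pt = "(real ^ 4) \<times> (complex ^ 'c)"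

text \<open>An extended spin-tensorial field (in the chart): components as functions of the point.\<close>
type_synonym 'c field = "'c pt \<Rightarrow> stidx \<Rightarrow> complex"

fun dder :: "'a list \<Rightarrow> ('a::real_normed_vector \<Rightarrow> 'b::real_normed_vector) \<Rightarrow> 'a \<Rightarrow> 'b" where
  "dder [] f = f"
| "dder (v # vs) f = (\<lambda>x. frechet_derivative (dder vs f) (at x) v)"

definition smooth_on :: "'a set \<Rightarrow> ('a::real_normed_vector \<Rightarrow> 'b::real_normed_vector) \<Rightarrow> bool" where
  "smooth_on S f \<longleftrightarrow> (\<forall>vs. \<forall>x\<in>S. dder vs f differentiable (at x))"

definition dirD :: "('a::real_normed_vector \<Rightarrow> 'b::real_normed_vector) \<Rightarrow> 'a \<Rightarrow> 'a \<Rightarrow> 'b" where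
  "dirD f v p = frechet_derivative f (at p) v"

definition xdir :: "nat \<Rightarrow> ('c::finite) pt" where
  "xdir k = (axis (of_nat k :: 4) 1, 0)"

definition pdx :: "(('c::finite) pt \<Rightarrow> complex) \<Rightarrow> nat \<Rightarrow> 'c pt \<Rightarrow> complex" where
  "pdx f k p = dirD f (xdir k) p"

text \<open>Wirtinger derivatives with respect to the fibre coordinate z = w_c and its conjugate:
 d/dz = (d/da - i d/db)/2, d/dzbar = (d/da + i d/db)/2, where z = a + i b.\<close>
definition wirt :: "(('c::finite) pt \<Rightarrow> complex) \<Rightarrow> 'c \<Rightarrow> 'c pt \<Rightarrow> complex" where
  "wirt f c p = (dirD f (0, axis c 1) p - \<i> * dirD f (0, axis c \<i>) p) / 2"

definition wirtb :: "(('c::finite) pt \<Rightarrow> complex) \<Rightarrow> 'c \<Rightarrow> 'c pt \<Rightarrow> complex" where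
  "wirtb f c p = (dirD f (0, axis c 1) p + \<i> * dirD f (0, axis c \<i>) p) / 2"

text \<open>The fields S[Q] and tau(S[Q]); crd Q I is the fibre coordinate carrying S[Q]^I.\<close>
definition Sfield :: "(nat \<Rightarrow> stidx \<Rightarrow> 'c::finite) \<Rightarrow> nat \<Rightarrow> 'c field" where
  "Sfield crd Q p I = snd p $ crd Q I"

definition tauF :: "'c field \<Rightarrow> 'c field" where
  "tauF Z p = tau_st (Z p)"

definition Lf :: "('c pt \<Rightarrow> cmat) \<Rightarrow> ('c pt \<Rightarrow> cmat) \<Rightarrow> ('c pt \<Rightarrow> cmat) \<Rightarrow> 'c field \<Rightarrow> 'c field" where
  "Lf a b g Z p = lop (a p) (b p) (g p) (Z p)"

text \<open>Native multivariate differentiations (componentwise in Z).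
 nvec crd ty P Y Z = sum over I in idx(ty P) of Y^I dZ/dS[P]^I;
 nbar crd ty P Y Z = sum over I' in idx(tau(ty P)) of Y^I' dZ/d tau(S[P])^I',
 where tau(S[P])^I' = conj(S[P]^{swap I'}).\<close>
definition nvec :: "(nat \<Rightarrow> stidx \<Rightarrow> 'c::finite) \<Rightarrow> (nat \<Rightarrow> sttype) \<Rightarrow> nat \<Rightarrow> 'c field \<Rightarrow> 'c field \<Rightarrow> 'c field" where
  "nvec crd ty P Y Z p I = (\<Sum>I'\<in>idx (ty P). Y p I' * wirt (\<lambda>q. Z q I) (crd P I') p)"

definition nbar :: "(nat \<Rightarrow> stidx \<Rightarrow> 'c::finite) \<Rightarrow> (nat \<Rightarrow> sttype) \<Rightarrow> nat \<Rightarrow> 'c field \<Rightarrow> 'c field \<Rightarrow> 'c field" where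
  "nbar crd ty P Y Z p I =
     (\<Sum>I'\<in>idx (tauty (ty P)). Y p I' * wirtb (\<lambda>q. Z q I) (crd P (swapidx I')) p)"

text \<open>Ups k j x = Upsilon^k_j(x); cA j p k i = A^k_{j i}(p); cAb j p k i = bar A^k_{j i}(p);
 cG j p k i = Gamma^k_{j i}(p).\<close>
definition nabla_j ::
  "nat \<Rightarrow> (nat \<Rightarrow> sttype) \<Rightarrow> (nat \<Rightarrow> stidx \<Rightarrow> 'c::finite) \<Rightarrow> (nat \<Rightarrow> nat \<Rightarrow> real ^ 4 \<Rightarrow> real)
   \<Rightarrow> (nat \<Rightarrow> 'c pt \<Rightarrow> cmat) \<Rightarrow> (nat \<Rightarrow> 'c pt \<Rightarrow> cmat) \<Rightarrow> (nat \<Rightarrow> 'c pt \<Rightarrow> cmat)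
   \<Rightarrow> nat \<Rightarrow> 'c field \<Rightarrow> 'c field" where
  "nabla_j J ty crd Ups cA cAb cG j Z p I =
      (\<Sum>k\<in>tn_range. complex_of_real (Ups k j (fst p)) * pdx (\<lambda>q. Z q I) k p)
    - (\<Sum>Q\<in>{1..J}. \<Sum>I'\<in>idx (ty Q).
          Lf (cA j) (cAb j) (cG j) (Sfield crd Q) p I' * wirt (\<lambda>q. Z q I) (crd Q I') p)
    - (\<Sum>Q\<in>{1..J}. \<Sum>I'\<in>idx (tauty (ty Q)).
          Lf (cA j) (cAb j) (cG j) (tauF (Sfield crd Q)) p I'
            * wirtb (\<lambda>q. Z q I) (crd Q (swapidx I')) p)
    + Lf (cA j) (cAb j) (cG j) Z p I"

definition nablaX ::
  "nat \<Rightarrow> (nat \<Rightarrow> sttype) \<Rightarrow> (nat \<Rightarrow> stidx \<Rightarrow> 'c::finite) \<Rightarrow> (nat \<Rightarrow> nat \<Rightarrow> real ^ 4 \<Rightarrow> real)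
   \<Rightarrow> (nat \<Rightarrow> 'c pt \<Rightarrow> cmat) \<Rightarrow> (nat \<Rightarrow> 'c pt \<Rightarrow> cmat) \<Rightarrow> (nat \<Rightarrow> 'c pt \<Rightarrow> cmat)
   \<Rightarrow> 'c field \<Rightarrow> 'c field \<Rightarrow> 'c field" where
  "nablaX J ty crd Ups cA cAb cG X Z p I =
     (\<Sum>j\<in>tn_range. X p (vidx j) * nabla_j J ty crd Ups cA cAb cG j Z p I)"

definition smooth_field :: "('c::finite) pt set \<Rightarrow> sttype \<Rightarrow> 'c field \<Rightarrow> bool" where
  "smooth_field W t Z \<longleftrightarrow> (\<forall>I\<in>idx t. smooth_on W (\<lambda>q. Z q I))"

end

theory Submission
  imports Defs
begin

text \<open>In a chart write \<open>\<nabla>\<^sub>j Z = D\<^sub>j Z + L\<^sub>j Z\<close>, where \<open>D\<^sub>j\<close> is a derivation acting on components (the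
  frame derivative minus the fibre derivatives weighted by \<open>L\<^sub>j S[Q]\<close> and \<open>L\<^sub>j \<tau>(S[Q])\<close>) and \<open>L\<^sub>j\<close> is
  the algebraic action of the connection. Coordinate and Wirtinger derivatives commute (Schwarz), so
  in \<open>[\<nabla>\<^sub>X, \<partial>\<^sub>Y]\<close> only derivatives of coefficients survive. Differentiating the coefficients \<open>X\<^sup>j\<close>
  gives \<open>-\<nabla>\<^sub>V\<close>; differentiating the connection coefficients in \<open>L\<^sub>j Z\<close> gives \<open>D(\<NN>\<^sup>+,\<dots>)Z\<close>.
  The coefficients \<open>L\<^sub>j S[Q]\<close> of \<open>D\<^sub>j\<close> depend on the fibre twice: through the connection, giving the
  terms in \<open>U[Q]\<close> and its barred counterpart, and through \<open>\<partial>S[Q]/\<partial>S[P] = \<delta>\<close>, giving \<open>L\<^sub>j Y\<close>, which together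
  with \<open>D\<^sub>j Y\<close> assembles \<open>\<nabla>\<^sub>X Y = U\<close>.\<close>

section \<open>Symmetry of second derivatives\<close>

lemma has_vector_derivative_along_line:
  fixes F :: "'a::real_normed_vector \<Rightarrow> 'b::real_normed_vector"
  assumes "F differentiable (at (x + t *\<^sub>R v))"
  shows "((\<lambda>t. F (x + t *\<^sub>R v)) has_vector_derivative frechet_derivative F (at (x + t *\<^sub>R v)) v) (at t)"
proof -
  have F': "(F has_derivative frechet_derivative F (at (x + t *\<^sub>R v))) (at (x + t *\<^sub>R v))"
    using assms by (simp add: frechet_derivative_works)
  have "((\<lambda>t. x + t *\<^sub>R v) has_derivative (\<lambda>u. u *\<^sub>R v)) (at t)"
    by (auto intro!: derivative_eq_intros)
  from diff_chain_at[OF this F'] show ?thesis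
    using linear_scale[OF has_derivative_linear[OF F']]
    by (simp add: has_vector_derivative_def o_def)
qed

lemma has_derivative_difference_estimate:
  fixes f :: "'a::real_normed_vector \<Rightarrow> 'b::real_normed_vector"
  assumes "(f has_derivative f') (at p)" and "e > 0"
  obtains d where "d > 0" and "\<And>y z. norm y < d \<Longrightarrow> norm z < d \<Longrightarrow>
      norm (f (p + y) - f (p + z) - f' (y - z)) \<le> e * (norm y + norm z)"
proof -
  obtain d where d: "d > 0" "\<And>y. norm (y - p) < d \<Longrightarrow> norm (f y - f p - f' (y - p)) \<le> e * norm (y - p)"
    using assms unfolding has_derivative_at_alt by blast
  have lin: "linear f'" using assms(1) by (rule has_derivative_linear)
  show thesis
  proof (rule that[OF d(1)])
    fix y z :: 'a assume "norm y < d" "norm z < d"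
    then have "norm (f (p + y) - f p - f' y) \<le> e * norm y" "norm (f (p + z) - f p - f' z) \<le> e * norm z"
      using d(2)[of "p + y"] d(2)[of "p + z"] by simp_all
    moreover have "f (p + y) - f (p + z) - f' (y - z) = (f (p + y) - f p - f' y) - (f (p + z) - f p - f' z)"
      using linear_diff[OF lin] by simp
    ultimately show "norm (f (p + y) - f (p + z) - f' (y - z)) \<le> e * (norm y + norm z)"
      by (smt (verit, best) distrib_left norm_triangle_ineq4)
  qed
qed

lemma norm_scaleR_add_le:
  fixes v w :: "'a::real_normed_vector"
  assumes "0 \<le> s" "s \<le> h" "0 \<le> t" "t \<le> h"
  shows "norm (s *\<^sub>R w + t *\<^sub>R v) \<le> h * (norm v + norm w)"
proof -
  have "norm (s *\<^sub>R w + t *\<^sub>R v) \<le> t * norm v + s * norm w"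
    using assms by (smt (verit) norm_scaleR norm_triangle_ineq abs_of_nonneg)
  also have "\<dots> \<le> h * (norm v + norm w)"
    using assms by (simp add: distrib_left add_mono mult_right_mono)
  finally show ?thesis .
qed

lemma second_difference_mean_value:
  fixes F :: "'a::real_normed_vector \<Rightarrow> 'b::real_normed_vector"
  assumes h: "0 < h"
    and dF: "\<And>s t. s \<in> {0, h} \<Longrightarrow> t \<in> {0..h} \<Longrightarrow> F differentiable (at (p + s *\<^sub>R w + t *\<^sub>R v))"
    and bound: "\<And>t. t \<in> {0..h} \<Longrightarrow> norm (frechet_derivative F (at (p + h *\<^sub>R w + t *\<^sub>R v)) v
                  - frechet_derivative F (at (p + 0 *\<^sub>R w + t *\<^sub>R v)) v - h *\<^sub>R a) \<le> M"
  shows "norm ((F (p + h *\<^sub>R v + h *\<^sub>R w) - F (p + h *\<^sub>R v) - F (p + h *\<^sub>R w) + F p) - (h * h) *\<^sub>R a) \<le> M * h"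
proof -
  define Dv where "Dv = (\<lambda>x. frechet_derivative F (at x) v)"
  define g where "g = (\<lambda>t. F (p + h *\<^sub>R w + t *\<^sub>R v) - F (p + 0 *\<^sub>R w + t *\<^sub>R v) - (t * h) *\<^sub>R a)"
  define g' where "g' = (\<lambda>t. Dv (p + h *\<^sub>R w + t *\<^sub>R v) - Dv (p + 0 *\<^sub>R w + t *\<^sub>R v) - h *\<^sub>R a)"
  have line: "((\<lambda>t. F (p + s *\<^sub>R w + t *\<^sub>R v)) has_vector_derivative Dv (p + s *\<^sub>R w + t *\<^sub>R v)) (at t)"
    if "s \<in> {0, h}" "t \<in> {0..h}" for s t
    using has_vector_derivative_along_line[of F "p + s *\<^sub>R w" t v] dF[OF that] unfolding Dv_def by simp
  have g': "(g has_vector_derivative g' t) (at t)" if "t \<in> {0..h}" for t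
  proof -
    have "((\<lambda>t. (t * h) *\<^sub>R a) has_vector_derivative h *\<^sub>R a) (at t)"
      by (auto intro!: derivative_eq_intros simp: has_vector_derivative_def)
    then show ?thesis
      unfolding g_def g'_def using that line[of h t] line[of 0 t]
      by (intro has_vector_derivative_diff) auto
  qed
  have g'_bound: "norm (g' t) \<le> M" if "t \<in> {0..h}" for t
    using bound[OF that] unfolding g'_def Dv_def .
  have "continuous_on {0..h} g"
    using g' by (meson continuous_at_imp_continuous_on has_vector_derivative_continuous)
  moreover have "((\<lambda>t. M * t) has_vector_derivative M) (at t)" for t
    by (auto intro!: derivative_eq_intros simp: has_vector_derivative_def)
  ultimately have "norm (g h - g 0) \<le> M * h - M * 0"
    using h g' g'_bound
    by (intro differentiable_bound_general[where f' = g' and \<phi> = "\<lambda>t. M * t" and \<phi>' = "\<lambda>_. M"])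
      (auto intro!: continuous_intros)
  moreover have "g h - g 0 = (F (p + h *\<^sub>R v + h *\<^sub>R w) - F (p + h *\<^sub>R v) - F (p + h *\<^sub>R w) + F p) - (h * h) *\<^sub>R a"
    unfolding g_def by (simp add: algebra_simps)
  ultimately show ?thesis by simp
qed

lemma has_derivative_increment_estimate:
  fixes f :: "'a::real_normed_vector \<Rightarrow> 'b::real_normed_vector"
  assumes f': "(f has_derivative f') (at p)" and e: "e > 0"
  obtains d where "d > 0" and "\<And>h t. 0 < h \<Longrightarrow> h < d \<Longrightarrow> t \<in> {0..h} \<Longrightarrow>
      norm (f (p + h *\<^sub>R w + t *\<^sub>R v) - f (p + 0 *\<^sub>R w + t *\<^sub>R v) - h *\<^sub>R f' w) \<le> e * h"
proof -
  define K where "K = 2 * norm v + norm w + 1"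
  have K: "K > 0" unfolding K_def by (smt (verit) norm_ge_zero)
  obtain d where d: "d > 0" "\<And>y z. norm y < d \<Longrightarrow> norm z < d \<Longrightarrow>
      norm (f (p + y) - f (p + z) - f' (y - z)) \<le> (e / K) * (norm y + norm z)"
    using has_derivative_difference_estimate[OF f', of "e / K"] e K by auto
  show thesis
  proof (rule that[of "d / K"])
    show "d / K > 0" using d K by simp
    fix h t assume h: "0 < h" "h < d / K" and t: "t \<in> {0..h}"
    define y z where "y = h *\<^sub>R w + t *\<^sub>R v" and "z = 0 *\<^sub>R w + t *\<^sub>R v"
    have yz: "norm y \<le> h * (norm v + norm w)" "norm z \<le> h * norm v"
      using t h unfolding y_def z_def by (auto intro: norm_scaleR_add_le simp: mult_right_mono)
    moreover have "h * (norm v + norm w) < d"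
      using h K unfolding K_def by (smt (verit, best) mult_left_mono norm_ge_zero pos_less_divide_eq)
    moreover have "h * norm v \<le> h * (norm v + norm w)"
      using h by simp
    ultimately have "norm y < d" "norm z < d"
      by linarith+
    then have "norm (f (p + y) - f (p + z) - f' (y - z)) \<le> (e / K) * (norm y + norm z)"
      by (rule d(2))
    also have "\<dots> \<le> (e / K) * (h * (norm v + norm w) + h * norm v)"
      using yz e K by (intro mult_left_mono add_mono) auto
    also have "\<dots> \<le> e * h"
      using e K h unfolding K_def by (simp add: field_simps)
    finally show "norm (f (p + h *\<^sub>R w + t *\<^sub>R v) - f (p + 0 *\<^sub>R w + t *\<^sub>R v) - h *\<^sub>R f' w) \<le> e * h"
      unfolding y_def z_def using linear_scale[OF has_derivative_linear[OF f']] by (simp add: add.assoc)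
  qed
qed

lemma second_difference_estimate:
  fixes F :: "'a::real_normed_vector \<Rightarrow> 'b::real_normed_vector"
  assumes W: "open W" "p \<in> W" and dF: "\<And>x. x \<in> W \<Longrightarrow> F differentiable (at x)"
    and dv: "(\<lambda>x. frechet_derivative F (at x) v) differentiable (at p)"
    and e: "e > 0"
  shows "\<exists>d>0. \<forall>h. 0 < h \<and> h < d \<longrightarrow>
     norm ((F (p + h *\<^sub>R v + h *\<^sub>R w) - F (p + h *\<^sub>R v) - F (p + h *\<^sub>R w) + F p)
        - (h * h) *\<^sub>R frechet_derivative (\<lambda>x. frechet_derivative F (at x) v) (at p) w) \<le> e * (h * h)"
proof -
  define Dv where "Dv = (\<lambda>x. frechet_derivative F (at x) v)"
  define Lv where "Lv = frechet_derivative Dv (at p)"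
  have "(Dv has_derivative Lv) (at p)"
    using dv unfolding Dv_def Lv_def by (simp add: frechet_derivative_works)
  then obtain d1 where d1: "d1 > 0" "\<And>h t. 0 < h \<Longrightarrow> h < d1 \<Longrightarrow> t \<in> {0..h} \<Longrightarrow>
      norm (Dv (p + h *\<^sub>R w + t *\<^sub>R v) - Dv (p + 0 *\<^sub>R w + t *\<^sub>R v) - h *\<^sub>R Lv w) \<le> e * h"
    using has_derivative_increment_estimate e by blast
  obtain r where r: "r > 0" "ball p r \<subseteq> W" using W openE by blast
  define d where "d = min d1 (r / (norm v + norm w + 1))"
  show ?thesis
  proof (intro exI[of _ d] conjI allI impI)
    show "d > 0" unfolding d_def using d1 r by (simp add: add_nonneg_pos)
    fix h :: real assume h: "0 < h \<and> h < d"
    have "p + s *\<^sub>R w + t *\<^sub>R v \<in> W" if "s \<in> {0, h}" "t \<in> {0..h}" for s t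
    proof -
      have "norm (s *\<^sub>R w + t *\<^sub>R v) \<le> h * (norm v + norm w)"
        using that h by (intro norm_scaleR_add_le) auto
      also have "\<dots> \<le> h * (norm v + norm w + 1)"
        using h by simp
      also have "\<dots> < r"
        using h unfolding d_def by (simp add: pos_less_divide_eq add_nonneg_pos)
      finally have "dist p (p + s *\<^sub>R w + t *\<^sub>R v) < r"
        by (metis add.assoc add_diff_cancel_left' dist_commute dist_norm)
      with r(2) show ?thesis by auto
    qed
    then have "norm ((F (p + h *\<^sub>R v + h *\<^sub>R w) - F (p + h *\<^sub>R v) - F (p + h *\<^sub>R w) + F p)
        - (h * h) *\<^sub>R Lv w) \<le> e * h * h"
      using h dF d1(2)[of h] unfolding Dv_def d_def by (intro second_difference_mean_value) auto
    then show "norm ((F (p + h *\<^sub>R v + h *\<^sub>R w) - F (p + h *\<^sub>R v) - F (p + h *\<^sub>R w) + F p)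
        - (h * h) *\<^sub>R frechet_derivative (\<lambda>x. frechet_derivative F (at x) v) (at p) w) \<le> e * (h * h)"
      unfolding Lv_def Dv_def by (simp add: mult.assoc)
  qed
qed

lemma frechet_derivative_second_commute:
  fixes F :: "'a::real_normed_vector \<Rightarrow> 'b::real_normed_vector"
  assumes W: "open W" "p \<in> W" and dF: "\<And>x. x \<in> W \<Longrightarrow> F differentiable (at x)"
    and dv: "(\<lambda>x. frechet_derivative F (at x) v) differentiable (at p)"
    and dw: "(\<lambda>x. frechet_derivative F (at x) w) differentiable (at p)"
  shows "frechet_derivative (\<lambda>x. frechet_derivative F (at x) v) (at p) w
       = frechet_derivative (\<lambda>x. frechet_derivative F (at x) w) (at p) v"
proof -
  define a where "a = frechet_derivative (\<lambda>x. frechet_derivative F (at x) v) (at p) w"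
  define b where "b = frechet_derivative (\<lambda>x. frechet_derivative F (at x) w) (at p) v"
  have "norm (a - b) \<le> 0 + e" if e: "e > 0" for e
  proof -
    obtain d1 where d1: "d1 > 0" "\<And>h. 0 < h \<and> h < d1 \<Longrightarrow>
       norm ((F (p + h *\<^sub>R v + h *\<^sub>R w) - F (p + h *\<^sub>R v) - F (p + h *\<^sub>R w) + F p) - (h * h) *\<^sub>R a) \<le> (e / 2) * (h * h)"
      using second_difference_estimate[OF W dF dv, of "e / 2" w] e unfolding a_def by auto
    obtain d2 where d2: "d2 > 0" "\<And>h. 0 < h \<and> h < d2 \<Longrightarrow>
       norm ((F (p + h *\<^sub>R w + h *\<^sub>R v) - F (p + h *\<^sub>R w) - F (p + h *\<^sub>R v) + F p) - (h * h) *\<^sub>R b) \<le> (e / 2) * (h * h)"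
      using second_difference_estimate[OF W dF dw, of "e / 2" v] e unfolding b_def by auto
    define h where "h = min d1 d2 / 2"
    have h: "0 < h" "h < d1" "h < d2" unfolding h_def using d1 d2 by auto
    define \<Delta> where "\<Delta> = F (p + h *\<^sub>R v + h *\<^sub>R w) - F (p + h *\<^sub>R v) - F (p + h *\<^sub>R w) + F p"
    have "norm (\<Delta> - (h * h) *\<^sub>R a) \<le> (e / 2) * (h * h)" "norm (\<Delta> - (h * h) *\<^sub>R b) \<le> (e / 2) * (h * h)"
      using d1(2)[of h] d2(2)[of h] h unfolding \<Delta>_def by (auto simp: algebra_simps)
    then have "norm ((h * h) *\<^sub>R a - (h * h) *\<^sub>R b) \<le> e * (h * h)"
      using norm_triangle_ineq4[of "\<Delta> - (h * h) *\<^sub>R b" "\<Delta> - (h * h) *\<^sub>R a"]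
      by (simp add: norm_minus_commute)
    then show ?thesis
      using h by (simp add: scaleR_diff_right[symmetric])
  qed
  then have "norm (a - b) \<le> 0"
    by (rule field_le_epsilon)
  then show ?thesis
    unfolding a_def b_def by simp
qed


section \<open>Point derivations, directional and Wirtinger derivatives\<close>

definition point_derivation :: "(('a::real_normed_vector \<Rightarrow> complex) \<Rightarrow> complex) \<Rightarrow> 'a \<Rightarrow> bool" where
  "point_derivation \<delta> p \<longleftrightarrow>
     (\<forall>f g. f differentiable (at p) \<longrightarrow> g differentiable (at p) \<longrightarrow>
        \<delta> (\<lambda>q. f q + g q) = \<delta> f + \<delta> g \<and> \<delta> (\<lambda>q. f q * g q) = \<delta> f * g p + f p * \<delta> g)
   \<and> (\<forall>c. \<delta> (\<lambda>q. c) = 0)"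

lemma derivation_add:
  "point_derivation \<delta> p \<Longrightarrow> f differentiable (at p) \<Longrightarrow> g differentiable (at p) \<Longrightarrow>
   \<delta> (\<lambda>q. f q + g q) = \<delta> f + \<delta> g"
  unfolding point_derivation_def by blast

lemma derivation_mult:
  "point_derivation \<delta> p \<Longrightarrow> f differentiable (at p) \<Longrightarrow> g differentiable (at p) \<Longrightarrow>
   \<delta> (\<lambda>q. f q * g q) = \<delta> f * g p + f p * \<delta> g"
  unfolding point_derivation_def by blast

lemma derivation_const: "point_derivation \<delta> p \<Longrightarrow> \<delta> (\<lambda>q. c) = 0"
  unfolding point_derivation_def by blast

lemma derivation_cmult:
  "point_derivation \<delta> p \<Longrightarrow> f differentiable (at p) \<Longrightarrow> \<delta> (\<lambda>q. c * f q) = c * \<delta> f"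
  using derivation_mult[of \<delta> p "\<lambda>q. c" f] derivation_const[of \<delta> p c] by simp

lemma derivation_diff:
  "point_derivation \<delta> p \<Longrightarrow> f differentiable (at p) \<Longrightarrow> g differentiable (at p) \<Longrightarrow>
   \<delta> (\<lambda>q. f q - g q) = \<delta> f - \<delta> g"
  using derivation_add[of \<delta> p f "\<lambda>q. (- 1) * g q"] derivation_cmult[of \<delta> p g "- 1"] by simp

lemma derivation_sum:
  assumes "point_derivation \<delta> p" and "\<And>x. x \<in> S \<Longrightarrow> f x differentiable (at p)"
  shows "\<delta> (\<lambda>q. \<Sum>x\<in>S. f x q) = (\<Sum>x\<in>S. \<delta> (f x))"
  using assms(2)
proof (induction S rule: infinite_finite_induct)
  case (insert x S)
  then have "\<delta> (\<lambda>q. f x q + (\<Sum>x\<in>S. f x q)) = \<delta> (f x) + \<delta> (\<lambda>q. \<Sum>x\<in>S. f x q)"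
    by (intro derivation_add[OF assms(1)]) (auto intro!: differentiable_sum)
  with insert show ?case by simp
qed (use derivation_const[OF assms(1)] in simp_all)

lemma point_derivation_dirD: "point_derivation (\<lambda>f. dirD f v p) p"
  unfolding point_derivation_def
proof (intro conjI allI impI)
  fix f g :: "'a \<Rightarrow> complex" assume "f differentiable (at p)" "g differentiable (at p)"
  then have f: "(f has_derivative frechet_derivative f (at p)) (at p)"
    and g: "(g has_derivative frechet_derivative g (at p)) (at p)"
    by (simp_all add: frechet_derivative_works)
  show "dirD (\<lambda>q. f q + g q) v p = dirD f v p + dirD g v p"
    using frechet_derivative_at[OF has_derivative_add[OF f g]] unfolding dirD_def by metis
  show "dirD (\<lambda>q. f q * g q) v p = dirD f v p * g p + f p * dirD g v p"
    using frechet_derivative_at[OF has_derivative_mult[OF f g]] unfolding dirD_def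
    by (metis add.commute)
next
  fix c :: complex
  show "dirD (\<lambda>q. c) v p = 0"
    using frechet_derivative_at[OF has_derivative_const[of c "at p"]] unfolding dirD_def by metis
qed

lemma point_derivation_add:
  "point_derivation \<delta>\<^sub>1 p \<Longrightarrow> point_derivation \<delta>\<^sub>2 p \<Longrightarrow> point_derivation (\<lambda>f. \<delta>\<^sub>1 f + \<delta>\<^sub>2 f) p"
  unfolding point_derivation_def by (auto simp: algebra_simps)

lemma point_derivation_diff:
  "point_derivation \<delta>\<^sub>1 p \<Longrightarrow> point_derivation \<delta>\<^sub>2 p \<Longrightarrow> point_derivation (\<lambda>f. \<delta>\<^sub>1 f - \<delta>\<^sub>2 f) p"
  unfolding point_derivation_def by (auto simp: algebra_simps)

lemma point_derivation_scale: "point_derivation \<delta> p \<Longrightarrow> point_derivation (\<lambda>f. c * \<delta> f) p"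
  unfolding point_derivation_def by (auto simp: algebra_simps)

lemma point_derivation_sum:
  "(\<And>x. x \<in> S \<Longrightarrow> point_derivation (\<delta> x) p) \<Longrightarrow> point_derivation (\<lambda>f. \<Sum>x\<in>S. \<delta> x f) p"
proof (induction S rule: infinite_finite_induct)
  case (insert x S)
  then show ?case by (simp add: point_derivation_add)
qed (simp_all add: point_derivation_def)

text \<open>The Wirtinger derivatives and the coordinate derivatives are all of the form
  \<open>a \<partial>\<^sub>v\<^sub>1 + b \<partial>\<^sub>v\<^sub>2\<close>, so one commutation lemma serves for every pair of them.\<close>
definition dirD_comb :: "complex \<Rightarrow> complex \<Rightarrow> 'a \<Rightarrow> 'a \<Rightarrow> ('a::real_normed_vector \<Rightarrow> complex) \<Rightarrow> 'a \<Rightarrow> complex" where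
  "dirD_comb a b v\<^sub>1 v\<^sub>2 f q = a * dirD f v\<^sub>1 q + b * dirD f v\<^sub>2 q"

lemma wirt_eq_dirD_comb: "wirt f c = dirD_comb (1/2) (- \<i>/2) (0, axis c 1) (0, axis c \<i>) f"
  by (rule ext) (simp add: dirD_comb_def wirt_def field_simps)

lemma wirtb_eq_dirD_comb: "wirtb f c = dirD_comb (1/2) (\<i>/2) (0, axis c 1) (0, axis c \<i>) f"
  by (rule ext) (simp add: dirD_comb_def wirtb_def field_simps)

lemma pdx_eq_dirD_comb: "pdx f k = dirD_comb 1 0 (xdir k) (xdir k) f"
  by (rule ext) (simp add: dirD_comb_def pdx_def)

lemma point_derivation_dirD_comb: "point_derivation (\<lambda>f. dirD_comb a b v\<^sub>1 v\<^sub>2 f p) p"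
  unfolding dirD_comb_def by (intro point_derivation_add point_derivation_scale point_derivation_dirD)

lemma point_derivation_wirt: "point_derivation (\<lambda>f. wirt f c p) p"
  unfolding wirt_eq_dirD_comb by (rule point_derivation_dirD_comb)

lemma point_derivation_wirtb: "point_derivation (\<lambda>f. wirtb f c p) p"
  unfolding wirtb_eq_dirD_comb by (rule point_derivation_dirD_comb)

lemma point_derivation_pdx: "point_derivation (\<lambda>f. pdx f k p) p"
  unfolding pdx_eq_dirD_comb by (rule point_derivation_dirD_comb)

lemma smooth_on_imp_differentiable: "smooth_on W f \<Longrightarrow> q \<in> W \<Longrightarrow> f differentiable (at q)"
  unfolding smooth_on_def using dder.simps(1) by metis

lemma smooth_on_dirD_differentiable:
  assumes "smooth_on W f" "q \<in> W"
  shows "(\<lambda>x. dirD f v x) differentiable (at q)"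
proof -
  have "dder [v] f differentiable (at q)"
    using assms unfolding smooth_on_def by blast
  then show ?thesis by (simp add: dirD_def)
qed

lemma dirD_comb_differentiable:
  "smooth_on W f \<Longrightarrow> q \<in> W \<Longrightarrow> (\<lambda>x. dirD_comb a b v\<^sub>1 v\<^sub>2 f x) differentiable (at q)"
  unfolding dirD_comb_def
  by (intro differentiable_add differentiable_mult differentiable_const smooth_on_dirD_differentiable)

lemma dirD_comb_commute:
  assumes W: "open W" "p \<in> W" and f: "smooth_on W f"
  shows "dirD_comb a b v\<^sub>1 v\<^sub>2 (dirD_comb a' b' v\<^sub>1' v\<^sub>2' f) p = dirD_comb a' b' v\<^sub>1' v\<^sub>2' (dirD_comb a b v\<^sub>1 v\<^sub>2 f) p"
proof -
  have d: "(\<lambda>x. dirD f v x) differentiable (at p)" for v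
    using smooth_on_dirD_differentiable[OF f W(2)] .
  have schwarz: "dirD (\<lambda>x. dirD f v x) w p = dirD (\<lambda>x. dirD f w x) v p" for v w
    using frechet_derivative_second_commute[OF W smooth_on_imp_differentiable[OF f], of v w] d
    unfolding dirD_def by simp
  have expand: "dirD_comb a b v\<^sub>1 v\<^sub>2 (dirD_comb a' b' v\<^sub>1' v\<^sub>2' f) p
     = a * (a' * dirD (\<lambda>x. dirD f v\<^sub>1' x) v\<^sub>1 p + b' * dirD (\<lambda>x. dirD f v\<^sub>2' x) v\<^sub>1 p)
     + b * (a' * dirD (\<lambda>x. dirD f v\<^sub>1' x) v\<^sub>2 p + b' * dirD (\<lambda>x. dirD f v\<^sub>2' x) v\<^sub>2 p)"
    for a b v\<^sub>1 v\<^sub>2 a' b' v\<^sub>1' v\<^sub>2'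
    unfolding dirD_comb_def
    by (simp add: derivation_add[OF point_derivation_dirD] derivation_cmult[OF point_derivation_dirD] d)
  show ?thesis
    unfolding expand using schwarz by (simp add: algebra_simps)
qed

lemma wirt_pdx_commute: "open W \<Longrightarrow> p \<in> W \<Longrightarrow> smooth_on W f \<Longrightarrow> wirt (pdx f k) c p = pdx (wirt f c) k p"
  unfolding wirt_eq_dirD_comb pdx_eq_dirD_comb by (rule dirD_comb_commute)

lemma wirt_wirt_commute: "open W \<Longrightarrow> p \<in> W \<Longrightarrow> smooth_on W f \<Longrightarrow> wirt (wirt f c') c p = wirt (wirt f c) c' p"
  unfolding wirt_eq_dirD_comb by (rule dirD_comb_commute)

lemma wirt_wirtb_commute: "open W \<Longrightarrow> p \<in> W \<Longrightarrow> smooth_on W f \<Longrightarrow> wirt (wirtb f c') c p = wirtb (wirt f c) c' p"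
  unfolding wirt_eq_dirD_comb wirtb_eq_dirD_comb by (rule dirD_comb_commute)

lemma wirt_differentiable: "smooth_on W f \<Longrightarrow> q \<in> W \<Longrightarrow> (\<lambda>x. wirt f c x) differentiable (at q)"
  unfolding wirt_eq_dirD_comb by (rule dirD_comb_differentiable)

lemma wirtb_differentiable: "smooth_on W f \<Longrightarrow> q \<in> W \<Longrightarrow> (\<lambda>x. wirtb f c x) differentiable (at q)"
  unfolding wirtb_eq_dirD_comb by (rule dirD_comb_differentiable)

lemma pdx_differentiable: "smooth_on W f \<Longrightarrow> q \<in> W \<Longrightarrow> (\<lambda>x. pdx f k x) differentiable (at q)"
  unfolding pdx_eq_dirD_comb by (rule dirD_comb_differentiable)

lemma has_derivative_fibre_coord:
  "((\<lambda>q::('c::finite) pt. snd q $ c) has_derivative (\<lambda>h. snd h $ c)) (at p)"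
  using bounded_linear_compose[OF bounded_linear_vec_nth bounded_linear_snd]
  by (rule bounded_linear.has_derivative[where g = "\<lambda>x. x", OF _ has_derivative_ident])

lemma has_derivative_cnj_fibre_coord:
  "((\<lambda>q::('c::finite) pt. cnj (snd q $ c)) has_derivative (\<lambda>h. cnj (snd h $ c))) (at p)"
  using bounded_linear.has_derivative[OF bounded_linear_cnj has_derivative_fibre_coord] .

lemma differentiable_fibre_coord [simp]: "(\<lambda>q::('c::finite) pt. snd q $ c) differentiable (at p)"
  using has_derivative_fibre_coord differentiable_def by blast

lemma differentiable_cnj_fibre_coord [simp]: "(\<lambda>q::('c::finite) pt. cnj (snd q $ c)) differentiable (at p)"
  using has_derivative_cnj_fibre_coord differentiable_def by blast

lemma wirt_fibre_coord: "wirt (\<lambda>q::('c::finite) pt. snd q $ c') c p = (if c' = c then 1 else 0)"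
  unfolding wirt_def dirD_def using frechet_derivative_at[OF has_derivative_fibre_coord, of c' p, symmetric]
  by (simp add: axis_def)

lemma wirt_cnj_fibre_coord: "wirt (\<lambda>q::('c::finite) pt. cnj (snd q $ c')) c p = 0"
  unfolding wirt_def dirD_def using frechet_derivative_at[OF has_derivative_cnj_fibre_coord, of c' p, symmetric]
  by (simp add: axis_def)

lemma has_derivative_base_fun:
  assumes "(g has_derivative g') (at (fst p))"
  shows "((\<lambda>q::('c::finite) pt. complex_of_real (g (fst q))) has_derivative (\<lambda>h. complex_of_real (g' (fst h)))) (at p)"
proof -
  have "((\<lambda>q::'c pt. g (fst q)) has_derivative (\<lambda>h. g' (fst h))) (at p)"
    using diff_chain_at[OF has_derivative_fst[OF has_derivative_ident] assms] by (simp add: o_def)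
  then show ?thesis by (rule bounded_linear.has_derivative[OF bounded_linear_of_real])
qed

lemma differentiable_base_fun:
  "g differentiable (at (fst p)) \<Longrightarrow> (\<lambda>q::('c::finite) pt. complex_of_real (g (fst q))) differentiable (at p)"
  using has_derivative_base_fun unfolding differentiable_def by blast

lemma wirt_base_fun:
  assumes "g differentiable (at (fst p))"
  shows "wirt (\<lambda>q::('c::finite) pt. complex_of_real (g (fst q))) c p = 0"
proof -
  obtain g' where g': "(g has_derivative g') (at (fst p))"
    using assms differentiable_def by blast
  then have "g' 0 = 0"
    using has_derivative_linear linear_0 by blast
  then show ?thesis
    unfolding wirt_def dirD_def using frechet_derivative_at[OF has_derivative_base_fun[OF g'], symmetric]
    by simp
qed

section \<open>The algebraic action\<close>

lemma finite_idx [simp]: "finite (idx t)"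
proof -
  obtain al be nu ga m n where t: "t = (al, be, nu, ga, m, n)" by (cases t)
  have "idx t = {xs. set xs \<subseteq> sp_range \<and> length xs = al} \<times> {xs. set xs \<subseteq> sp_range \<and> length xs = be}
     \<times> {xs. set xs \<subseteq> sp_range \<and> length xs = nu} \<times> {xs. set xs \<subseteq> sp_range \<and> length xs = ga}
     \<times> {xs. set xs \<subseteq> tn_range \<and> length xs = m} \<times> {xs. set xs \<subseteq> tn_range \<and> length xs = n}"
    unfolding t by auto
  then show ?thesis
    by (simp add: finite_lists_length_eq sp_range_def tn_range_def)
qed

lemma finite_sp_range [simp]: "finite sp_range"
  by (simp add: sp_range_def)

lemma finite_tn_range [simp]: "finite tn_range"
  by (simp add: tn_range_def)

lemma set_list_update_subset [simp]: "set A \<subseteq> S \<Longrightarrow> v \<in> S \<Longrightarrow> set (A[\<mu> := v]) \<subseteq> S"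
  by (meson dual_order.trans insert_subset set_update_subset_insert)

lemma lop_cong:
  assumes "I \<in> idx t" and "\<And>I'. I' \<in> idx t \<Longrightarrow> Z\<^sub>1 I' = Z\<^sub>2 I'"
  shows "lop a b g Z\<^sub>1 I = lop a b g Z\<^sub>2 I"
proof -
  obtain al be nu ga m n where t: "t = (al, be, nu, ga, m, n)" by (cases t)
  obtain A B C D E F where I: "I = (A, B, C, D, E, F)" by (cases I)
  show ?thesis
    using assms unfolding t I
    by (simp only: lop.simps)
      (intro arg_cong2[where f = "(+)"] arg_cong2[where f = "(-)"] sum.cong refl arg_cong2[where f = "(*)"]; auto)
qed

lemma lop_add: "lop a b g (\<lambda>I. Z\<^sub>1 I + Z\<^sub>2 I) I = lop a b g Z\<^sub>1 I + lop a b g Z\<^sub>2 I"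
  by (cases I) (simp add: sum.distrib algebra_simps)

lemma lop_cmult: "lop a b g (\<lambda>I. c * Z I) I = c * lop a b g Z I"
  by (cases I) (simp add: sum_distrib_left algebra_simps)

lemma lop_zero: "lop a b g (\<lambda>I. 0) I = 0"
  by (cases I) simp

lemma lop_sum: "lop a b g (\<lambda>I'. \<Sum>x\<in>S. F x I') I = (\<Sum>x\<in>S. lop a b g (F x) I)"
  by (induction S rule: infinite_finite_induct) (simp_all add: lop_zero lop_add)

lemma lop_add_coeffs:
  "lop (\<lambda>k i. a\<^sub>1 k i + a\<^sub>2 k i) (\<lambda>k i. b\<^sub>1 k i + b\<^sub>2 k i) (\<lambda>k i. g\<^sub>1 k i + g\<^sub>2 k i) Z I
   = lop a\<^sub>1 b\<^sub>1 g\<^sub>1 Z I + lop a\<^sub>2 b\<^sub>2 g\<^sub>2 Z I"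
  by (cases I) (simp add: sum.distrib algebra_simps)

lemma lop_cmult_coeffs:
  "lop (\<lambda>k i. c * a k i) (\<lambda>k i. c * b k i) (\<lambda>k i. c * g k i) Z I = c * lop a b g Z I"
  by (cases I) (simp add: sum_distrib_left algebra_simps)

lemma lop_zero_coeffs: "lop (\<lambda>k i. 0) (\<lambda>k i. 0) (\<lambda>k i. 0) Z I = 0"
  by (cases I) simp

lemma lop_uminus_coeffs: "lop (\<lambda>k i. - a k i) (\<lambda>k i. - b k i) (\<lambda>k i. - g k i) Z I = - lop a b g Z I"
  using lop_cmult_coeffs[of "- 1" a b g Z I] by simp

lemma lop_sum_coeffs:
  "lop (\<lambda>k i. \<Sum>x\<in>S. a x k i) (\<lambda>k i. \<Sum>x\<in>S. b x k i) (\<lambda>k i. \<Sum>x\<in>S. g x k i) Z I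
   = (\<Sum>x\<in>S. lop (a x) (b x) (g x) Z I)"
  by (induction S rule: infinite_finite_induct) (simp_all add: lop_zero_coeffs lop_add_coeffs)

lemma derivation_lop:
  assumes \<delta>: "point_derivation \<delta> p" and I: "I \<in> idx t"
    and a: "\<And>k i. (\<lambda>q. a q k i) differentiable (at p)"
    and b: "\<And>k i. (\<lambda>q. b q k i) differentiable (at p)"
    and g: "\<And>k i. (\<lambda>q. g q k i) differentiable (at p)"
    and Z: "\<And>I'. I' \<in> idx t \<Longrightarrow> (\<lambda>q. Z q I') differentiable (at p)"
  shows "\<delta> (\<lambda>q. lop (a q) (b q) (g q) (Z q) I)
     = lop (\<lambda>k i. \<delta> (\<lambda>q. a q k i)) (\<lambda>k i. \<delta> (\<lambda>q. b q k i)) (\<lambda>k i. \<delta> (\<lambda>q. g q k i)) (Z p) I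
       + lop (a p) (b p) (g p) (\<lambda>I'. \<delta> (\<lambda>q. Z q I')) I"
proof -
  obtain al be nu ga m n where t: "t = (al, be, nu, ga, m, n)" by (cases t)
  obtain A B C D E F where I_eq: "I = (A, B, C, D, E, F)" by (cases I)
  note Z' = Z[unfolded t, simplified]
  show ?thesis
    using I unfolding t I_eq
    by (simp add: derivation_add[OF \<delta>] derivation_diff[OF \<delta>] derivation_sum[OF \<delta>]
        derivation_mult[OF \<delta>] a b g Z' sum.distrib algebra_simps)
qed

lemma lop_differentiable:
  assumes I: "I \<in> idx t"
    and "\<And>k i. (\<lambda>q. a q k i) differentiable (at p)"
    and "\<And>k i. (\<lambda>q. b q k i) differentiable (at p)"
    and "\<And>k i. (\<lambda>q. g q k i) differentiable (at p)"
    and Z: "\<And>I'. I' \<in> idx t \<Longrightarrow> (\<lambda>q. Z q I') differentiable (at p)"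
  shows "(\<lambda>q. lop (a q) (b q) (g q) (Z q) I) differentiable (at p)"
proof -
  obtain al be nu ga m n where t: "t = (al, be, nu, ga, m, n)" by (cases t)
  obtain A B C D E F where I_eq: "I = (A, B, C, D, E, F)" by (cases I)
  note Z' = Z[unfolded t, simplified]
  show ?thesis
    using I unfolding t I_eq by (simp add: assms(2-4) Z')
qed

lemma sum_swap_weighted:
  "(\<Sum>a\<in>A. (\<Sum>j\<in>T. x j * f j a) * w a) = (\<Sum>j\<in>T. x j * (\<Sum>a\<in>A. f j a * w a))"
  for x :: "'j \<Rightarrow> 'r::comm_semiring_1"
  by (simp add: sum_distrib_left sum_distrib_right mult.assoc sum.swap[of _ A])

section \<open>Covariant differentiation in an equipped chart\<close>

locale spinor_chart =
  fixes J :: nat and ty :: "nat \<Rightarrow> sttype"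
    and crd :: "nat \<Rightarrow> stidx \<Rightarrow> 'c::finite"
    and U :: "(real ^ 4) set"
    and Ups :: "nat \<Rightarrow> nat \<Rightarrow> real ^ 4 \<Rightarrow> real"
    and cA cAb cG :: "nat \<Rightarrow> 'c pt \<Rightarrow> cmat"
  assumes crd_inj: "inj_on (\<lambda>(Q, I). crd Q I) {(Q, I). Q \<in> {1..J} \<and> I \<in> idx (ty Q)}"
    and U_open: "open U"
    and Ups_smooth: "\<forall>k\<in>tn_range. \<forall>j\<in>tn_range. smooth_on U (Ups k j)"
    and conn_smooth: "\<forall>j\<in>tn_range. \<forall>k i. smooth_on (U \<times> UNIV) (\<lambda>q. cA j q k i)
                         \<and> smooth_on (U \<times> UNIV) (\<lambda>q. cAb j q k i) \<and> smooth_on (U \<times> UNIV) (\<lambda>q. cG j q k i)"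
begin

abbreviation nabla :: "'c field \<Rightarrow> 'c field \<Rightarrow> 'c field" where
  "nabla \<equiv> nablaX J ty crd Ups cA cAb cG"

lemma open_chart_domain: "open (U \<times> (UNIV :: (complex ^ 'c) set))"
  using U_open by (simp add: open_Times)

lemma crd_eq_iff:
  assumes "Q \<in> {1..J}" "I' \<in> idx (ty Q)" "P \<in> {1..J}" "I \<in> idx (ty P)"
  shows "crd Q I' = crd P I \<longleftrightarrow> Q = P \<and> I' = I"
  using inj_onD[OF crd_inj, of "(Q, I')" "(P, I)"] assms by auto

text \<open>Since \<open>\<partial>S[Q]\<^sup>I\<^sup>'/\<partial>S[P]\<^sup>I = \<delta>\<^sub>Q\<^sub>P \<delta>\<^sub>I\<^sub>'\<^sub>I\<close>, contracting the action on these derivatives with \<open>y\<close>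
  gives the action on \<open>y\<close>.\<close>
lemma sum_lop_kronecker:
  assumes P: "P \<in> {1..J}"
  shows "(\<Sum>I\<in>idx (ty P). y I * (\<Sum>Q\<in>{1..J}. \<Sum>I'\<in>idx (ty Q).
             lop a b g (\<lambda>I''. if crd Q I'' = crd P I then 1 else 0) I' * w Q I'))
       = (\<Sum>I\<in>idx (ty P). lop a b g y I * w P I)"
proof -
  have contract: "(\<Sum>I\<in>idx (ty P). y I * lop a b g (\<lambda>I''. if crd Q I'' = crd P I then 1 else 0) I')
      = (if Q = P then lop a b g y I' else 0)" if Q: "Q \<in> {1..J}" and I': "I' \<in> idx (ty Q)" for Q I'
  proof -
    have "(\<Sum>I\<in>idx (ty P). y I * lop a b g (\<lambda>I''. if crd Q I'' = crd P I then 1 else 0) I')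
        = lop a b g (\<lambda>I''. \<Sum>I\<in>idx (ty P). y I * (if crd Q I'' = crd P I then 1 else 0)) I'"
      by (simp add: lop_sum lop_cmult)
    also have "\<dots> = lop a b g (\<lambda>I''. if Q = P then y I'' else 0) I'"
    proof (rule lop_cong[OF I'])
      fix I'' assume I'': "I'' \<in> idx (ty Q)"
      have "(\<Sum>I\<in>idx (ty P). y I * (if crd Q I'' = crd P I then 1 else 0))
         = (\<Sum>I\<in>idx (ty P). if I = I'' then (if Q = P then y I else 0) else 0)"
        using crd_eq_iff[OF Q I'' P] by (intro sum.cong refl) auto
      also have "\<dots> = (if Q = P then y I'' else 0)"
        using I'' by (cases "Q = P") auto
      finally show "(\<Sum>I\<in>idx (ty P). y I * (if crd Q I'' = crd P I then 1 else 0)) = (if Q = P then y I'' else 0)" .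
    qed
    also have "\<dots> = (if Q = P then lop a b g y I' else 0)"
      by (cases "Q = P") (simp_all add: lop_zero)
    finally show ?thesis .
  qed
  have "(\<Sum>I\<in>idx (ty P). y I * (\<Sum>Q\<in>{1..J}. \<Sum>I'\<in>idx (ty Q).
             lop a b g (\<lambda>I''. if crd Q I'' = crd P I then 1 else 0) I' * w Q I'))
      = (\<Sum>Q\<in>{1..J}. \<Sum>I'\<in>idx (ty Q). (\<Sum>I\<in>idx (ty P). y I *
             lop a b g (\<lambda>I''. if crd Q I'' = crd P I then 1 else 0) I') * w Q I')"
    by (simp add: sum_distrib_left sum_distrib_right mult.assoc sum.swap[of _ "idx (ty P)"])
  also have "\<dots> = (\<Sum>Q\<in>{1..J}. if Q = P then (\<Sum>I'\<in>idx (ty P). lop a b g y I' * w P I') else 0)"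
    by (intro sum.cong refl) (simp add: contract cong: sum.cong)
  also have "\<dots> = (\<Sum>I\<in>idx (ty P). lop a b g y I * w P I)"
    using P by simp
  finally show ?thesis .
qed

text \<open>The derivation part \<open>D\<^sub>j\<close> of \<open>\<nabla>\<^sub>j\<close>.\<close>
definition hor_der :: "nat \<Rightarrow> ('c pt \<Rightarrow> complex) \<Rightarrow> 'c pt \<Rightarrow> complex" where
  "hor_der j f q =
      (\<Sum>k\<in>tn_range. complex_of_real (Ups k j (fst q)) * pdx f k q)
    - (\<Sum>Q\<in>{1..J}. \<Sum>I'\<in>idx (ty Q).
          Lf (cA j) (cAb j) (cG j) (Sfield crd Q) q I' * wirt f (crd Q I') q)
    - (\<Sum>Q\<in>{1..J}. \<Sum>I'\<in>idx (tauty (ty Q)).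
          Lf (cA j) (cAb j) (cG j) (tauF (Sfield crd Q)) q I' * wirtb f (crd Q (swapidx I')) q)"

lemma nablaX_eq:
  "nabla X Z q I = (\<Sum>j\<in>tn_range. X q (vidx j) * (hor_der j (\<lambda>q. Z q I) q + Lf (cA j) (cAb j) (cG j) Z q I))"
  unfolding nablaX_def nabla_j_def hor_der_def by simp

definition lop_wirt :: "nat \<Rightarrow> 'c \<Rightarrow> 'c pt \<Rightarrow> (stidx \<Rightarrow> complex) \<Rightarrow> stidx \<Rightarrow> complex" where
  "lop_wirt j c p = lop (\<lambda>k i. wirt (\<lambda>q. cA j q k i) c p) (\<lambda>k i. wirt (\<lambda>q. cAb j q k i) c p)
                        (\<lambda>k i. wirt (\<lambda>q. cG j q k i) c p)"

text \<open>For \<open>C = cA, cAb, cG\<close> these are the fields \<open>\<NN>\<^sup>+\<close>, \<open>\<NN>\<^sup>+\<close>-bar and \<open>\<^bold>N\<^sup>+\<close> of the statement.\<close>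
definition conn_variation :: "'c field \<Rightarrow> 'c field \<Rightarrow> nat \<Rightarrow> (nat \<Rightarrow> 'c pt \<Rightarrow> cmat) \<Rightarrow> 'c pt \<Rightarrow> cmat" where
  "conn_variation X Y P C p k i =
     - (\<Sum>j\<in>tn_range. \<Sum>I\<in>idx (ty P). X p (vidx j) * Y p I * wirt (\<lambda>q. C j q k i) (crd P I) p)"

abbreviation conn_variation_action :: "'c field \<Rightarrow> 'c field \<Rightarrow> nat \<Rightarrow> 'c field \<Rightarrow> 'c field" where
  "conn_variation_action X Y P \<equiv> Lf (conn_variation X Y P cA) (conn_variation X Y P cAb) (conn_variation X Y P cG)"

lemma conn_variation_action_eq:
  "conn_variation_action X Y P T p I
     = - (\<Sum>j\<in>tn_range. X p (vidx j) * (\<Sum>I'\<in>idx (ty P). Y p I' * lop_wirt j (crd P I') p (T p) I))"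
  unfolding Lf_def conn_variation_def lop_wirt_def
  by (simp add: lop_uminus_coeffs lop_sum_coeffs lop_cmult_coeffs sum_distrib_left mult.assoc)

lemma nvec_nabla_eq:
  "nvec crd ty P (nabla X Y) Z p I
     = (\<Sum>j\<in>tn_range. X p (vidx j) * (\<Sum>I'\<in>idx (ty P).
          (hor_der j (\<lambda>q. Y q I') p + lop (cA j p) (cAb j p) (cG j p) (Y p) I') * wirt (\<lambda>q. Z q I) (crd P I') p))"
  unfolding nvec_def nablaX_eq Lf_def by (rule sum_swap_weighted)

lemma nvec_conn_variation_action_Sfield:
  "(\<Sum>Q\<in>{1..J}. nvec crd ty Q (\<lambda>p I. - conn_variation_action X Y P (Sfield crd Q) p I) Z p I)
     = (\<Sum>j\<in>tn_range. X p (vidx j) * (\<Sum>Q\<in>{1..J}. \<Sum>I'\<in>idx (ty Q).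
          (\<Sum>I''\<in>idx (ty P). Y p I'' * lop_wirt j (crd P I'') p (Sfield crd Q p) I') * wirt (\<lambda>q. Z q I) (crd Q I') p))"
proof -
  have "(\<Sum>Q\<in>{1..J}. nvec crd ty Q (\<lambda>p I. - conn_variation_action X Y P (Sfield crd Q) p I) Z p I)
    = (\<Sum>Q\<in>{1..J}. \<Sum>j\<in>tn_range. X p (vidx j) * (\<Sum>I'\<in>idx (ty Q).
         (\<Sum>I''\<in>idx (ty P). Y p I'' * lop_wirt j (crd P I'') p (Sfield crd Q p) I') * wirt (\<lambda>q. Z q I) (crd Q I') p))"
    unfolding nvec_def conn_variation_action_eq minus_minus sum_swap_weighted ..
  then show ?thesis
    unfolding sum_distrib_left[of "X p (vidx _)"] by (simp only: sum.swap[of _ "{1..J}"])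
qed

lemma nbar_conn_variation_action_tau_Sfield:
  "(\<Sum>Q\<in>{1..J}. nbar crd ty Q (\<lambda>p I. - conn_variation_action X Y P (tauF (Sfield crd Q)) p I) Z p I)
     = (\<Sum>j\<in>tn_range. X p (vidx j) * (\<Sum>Q\<in>{1..J}. \<Sum>I'\<in>idx (tauty (ty Q)).
          (\<Sum>I''\<in>idx (ty P). Y p I'' * lop_wirt j (crd P I'') p (tauF (Sfield crd Q) p) I')
            * wirtb (\<lambda>q. Z q I) (crd Q (swapidx I')) p))"
proof -
  have "(\<Sum>Q\<in>{1..J}. nbar crd ty Q (\<lambda>p I. - conn_variation_action X Y P (tauF (Sfield crd Q)) p I) Z p I)
    = (\<Sum>Q\<in>{1..J}. \<Sum>j\<in>tn_range. X p (vidx j) * (\<Sum>I'\<in>idx (tauty (ty Q)).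
         (\<Sum>I''\<in>idx (ty P). Y p I'' * lop_wirt j (crd P I'') p (tauF (Sfield crd Q) p) I')
           * wirtb (\<lambda>q. Z q I) (crd Q (swapidx I')) p))"
    unfolding nbar_def conn_variation_action_eq minus_minus sum_swap_weighted ..
  then show ?thesis
    unfolding sum_distrib_left[of "X p (vidx _)"] by (simp only: sum.swap[of _ "{1..J}"])
qed

context
  fixes p :: "'c pt" and j :: nat
  assumes p: "p \<in> U \<times> UNIV" and j: "j \<in> tn_range"
begin

lemma conn_differentiable [simp]:
  "(\<lambda>q. cA j q k i) differentiable (at p)" "(\<lambda>q. cAb j q k i) differentiable (at p)"
  "(\<lambda>q. cG j q k i) differentiable (at p)"
  using conn_smooth j p smooth_on_imp_differentiable by blast+

lemma frame_differentiable [simp]: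
  "k \<in> tn_range \<Longrightarrow> (\<lambda>q. complex_of_real (Ups k j (fst q))) differentiable (at p)"
  using Ups_smooth j p smooth_on_imp_differentiable[of U "Ups k j" "fst p"]
  by (intro differentiable_base_fun) auto

lemma wirt_frame [simp]: "k \<in> tn_range \<Longrightarrow> wirt (\<lambda>q. complex_of_real (Ups k j (fst q))) c p = 0"
  using Ups_smooth j p smooth_on_imp_differentiable[of U "Ups k j" "fst p"]
  by (intro wirt_base_fun) auto

lemma Lf_Sfield_differentiable [simp]:
  "I' \<in> idx (ty Q) \<Longrightarrow> (\<lambda>q. Lf (cA j) (cAb j) (cG j) (Sfield crd Q) q I') differentiable (at p)"
  unfolding Lf_def Sfield_def by (rule lop_differentiable) auto

lemma Lf_tau_Sfield_differentiable [simp]: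
  "I' \<in> idx (tauty (ty Q)) \<Longrightarrow> (\<lambda>q. Lf (cA j) (cAb j) (cG j) (tauF (Sfield crd Q)) q I') differentiable (at p)"
  unfolding Lf_def Sfield_def tauF_def tau_st_def by (rule lop_differentiable) auto

lemma Lf_differentiable:
  "smooth_field (U \<times> UNIV) t Z \<Longrightarrow> I \<in> idx t \<Longrightarrow> (\<lambda>q. Lf (cA j) (cAb j) (cG j) Z q I) differentiable (at p)"
  unfolding Lf_def smooth_field_def
  by (rule lop_differentiable) (auto intro: smooth_on_imp_differentiable[OF _ p])

lemma hor_der_differentiable: "smooth_on (U \<times> UNIV) f \<Longrightarrow> (\<lambda>q. hor_der j f q) differentiable (at p)"
  unfolding hor_der_def
  by (intro differentiable_diff differentiable_sum ballI differentiable_mult frame_differentiable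
      Lf_Sfield_differentiable Lf_tau_Sfield_differentiable finite_idx finite_atLeastAtMost finite_tn_range
      pdx_differentiable[OF _ p] wirt_differentiable[OF _ p] wirtb_differentiable[OF _ p]) auto

lemma point_derivation_hor_der: "point_derivation (\<lambda>f. hor_der j f p) p"
  unfolding hor_der_def
  by (intro point_derivation_diff point_derivation_sum point_derivation_scale point_derivation_pdx
      point_derivation_wirt point_derivation_wirtb)

lemma wirt_Lf_Sfield:
  "I' \<in> idx (ty Q) \<Longrightarrow> wirt (\<lambda>q. Lf (cA j) (cAb j) (cG j) (Sfield crd Q) q I') c p
     = lop_wirt j c p (Sfield crd Q p) I' + lop (cA j p) (cAb j p) (cG j p) (\<lambda>I''. if crd Q I'' = c then 1 else 0) I'"
  unfolding Lf_def lop_wirt_def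
  by (subst derivation_lop[OF point_derivation_wirt, of I' "ty Q"]) (auto simp: Sfield_def wirt_fibre_coord)

lemma wirt_Lf_tau_Sfield:
  "I' \<in> idx (tauty (ty Q)) \<Longrightarrow> wirt (\<lambda>q. Lf (cA j) (cAb j) (cG j) (tauF (Sfield crd Q)) q I') c p
     = lop_wirt j c p (tauF (Sfield crd Q) p) I'"
  unfolding Lf_def lop_wirt_def
  by (subst derivation_lop[OF point_derivation_wirt, of I' "tauty (ty Q)"])
    (auto simp: Sfield_def tauF_def tau_st_def wirt_cnj_fibre_coord lop_zero)

lemma wirt_Lf:
  "smooth_field (U \<times> UNIV) t Z \<Longrightarrow> I \<in> idx t \<Longrightarrow> wirt (\<lambda>q. Lf (cA j) (cAb j) (cG j) Z q I) c p
     = lop_wirt j c p (Z p) I + lop (cA j p) (cAb j p) (cG j p) (\<lambda>I'. wirt (\<lambda>q. Z q I') c p) I"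
  unfolding Lf_def smooth_field_def lop_wirt_def
  by (subst derivation_lop[OF point_derivation_wirt, of I t]) (auto intro: smooth_on_imp_differentiable[OF _ p])

text \<open>The partial derivatives commute (Schwarz), so only the derivatives of the coefficients of
  \<open>hor_der\<close> survive in the commutator.\<close>
lemma wirt_hor_der_commute:
  assumes f: "smooth_on (U \<times> UNIV) f"
  shows "hor_der j (wirt f c) p - wirt (\<lambda>q. hor_der j f q) c p
    = (\<Sum>Q\<in>{1..J}. \<Sum>I'\<in>idx (ty Q).
          wirt (\<lambda>q. Lf (cA j) (cAb j) (cG j) (Sfield crd Q) q I') c p * wirt f (crd Q I') p)
    + (\<Sum>Q\<in>{1..J}. \<Sum>I'\<in>idx (tauty (ty Q)).
          wirt (\<lambda>q. Lf (cA j) (cAb j) (cG j) (tauF (Sfield crd Q)) q I') c p * wirtb f (crd Q (swapidx I')) p)"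
proof -
  note W = open_chart_domain p
  have "wirt (\<lambda>q. hor_der j f q) c p =
      (\<Sum>k\<in>tn_range. complex_of_real (Ups k j (fst p)) * wirt (pdx f k) c p)
    - (\<Sum>Q\<in>{1..J}. \<Sum>I'\<in>idx (ty Q).
          wirt (\<lambda>q. Lf (cA j) (cAb j) (cG j) (Sfield crd Q) q I') c p * wirt f (crd Q I') p
        + Lf (cA j) (cAb j) (cG j) (Sfield crd Q) p I' * wirt (wirt f (crd Q I')) c p)
    - (\<Sum>Q\<in>{1..J}. \<Sum>I'\<in>idx (tauty (ty Q)).
          wirt (\<lambda>q. Lf (cA j) (cAb j) (cG j) (tauF (Sfield crd Q)) q I') c p * wirtb f (crd Q (swapidx I')) p
        + Lf (cA j) (cAb j) (cG j) (tauF (Sfield crd Q)) p I' * wirt (wirtb f (crd Q (swapidx I'))) c p)"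
    unfolding hor_der_def
    by (simp add: derivation_diff[OF point_derivation_wirt] derivation_sum[OF point_derivation_wirt]
        derivation_mult[OF point_derivation_wirt]
        pdx_differentiable[OF f p] wirt_differentiable[OF f p] wirtb_differentiable[OF f p])
  then show ?thesis
    unfolding hor_der_def
    by (simp add: wirt_pdx_commute[OF W f] wirt_wirt_commute[OF W f, of _ c] wirt_wirtb_commute[OF W f]
        sum.distrib algebra_simps)
qed

lemma hor_der_commutator_contracted:
  assumes P: "P \<in> {1..J}" and f: "smooth_on (U \<times> UNIV) f"
  shows "(\<Sum>I\<in>idx (ty P). y I * (hor_der j (wirt f (crd P I)) p - wirt (\<lambda>q. hor_der j f q) (crd P I) p))
    = (\<Sum>I\<in>idx (ty P). lop (cA j p) (cAb j p) (cG j p) y I * wirt f (crd P I) p)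
    + (\<Sum>Q\<in>{1..J}. \<Sum>I'\<in>idx (ty Q).
         (\<Sum>I\<in>idx (ty P). y I * lop_wirt j (crd P I) p (Sfield crd Q p) I') * wirt f (crd Q I') p)
    + (\<Sum>Q\<in>{1..J}. \<Sum>I'\<in>idx (tauty (ty Q)).
         (\<Sum>I\<in>idx (ty P). y I * lop_wirt j (crd P I) p (tauF (Sfield crd Q) p) I') * wirtb f (crd Q (swapidx I')) p)"
proof -
  let ?L = "lop (cA j p) (cAb j p) (cG j p)"
  have "hor_der j (wirt f (crd P I)) p - wirt (\<lambda>q. hor_der j f q) (crd P I) p
    = (\<Sum>Q\<in>{1..J}. \<Sum>I'\<in>idx (ty Q). ?L (\<lambda>I''. if crd Q I'' = crd P I then 1 else 0) I' * wirt f (crd Q I') p)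
    + (\<Sum>Q\<in>{1..J}. \<Sum>I'\<in>idx (ty Q). lop_wirt j (crd P I) p (Sfield crd Q p) I' * wirt f (crd Q I') p)
    + (\<Sum>Q\<in>{1..J}. \<Sum>I'\<in>idx (tauty (ty Q)).
         lop_wirt j (crd P I) p (tauF (Sfield crd Q) p) I' * wirtb f (crd Q (swapidx I')) p)" for I
    unfolding wirt_hor_der_commute[OF f]
    by (simp add: wirt_Lf_Sfield wirt_Lf_tau_Sfield distrib_right sum.distrib cong: sum.cong)
  then have "(\<Sum>I\<in>idx (ty P). y I * (hor_der j (wirt f (crd P I)) p - wirt (\<lambda>q. hor_der j f q) (crd P I) p))
    = (\<Sum>I\<in>idx (ty P). y I * (\<Sum>Q\<in>{1..J}. \<Sum>I'\<in>idx (ty Q).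
         ?L (\<lambda>I''. if crd Q I'' = crd P I then 1 else 0) I' * wirt f (crd Q I') p))
    + (\<Sum>Q\<in>{1..J}. \<Sum>I'\<in>idx (ty Q).
         (\<Sum>I\<in>idx (ty P). y I * lop_wirt j (crd P I) p (Sfield crd Q p) I') * wirt f (crd Q I') p)
    + (\<Sum>Q\<in>{1..J}. \<Sum>I'\<in>idx (tauty (ty Q)).
         (\<Sum>I\<in>idx (ty P). y I * lop_wirt j (crd P I) p (tauF (Sfield crd Q) p) I') * wirtb f (crd Q (swapidx I')) p)"
    by (simp add: distrib_left sum.distrib sum_distrib_left sum_distrib_right mult.assoc
        sum.swap[of _ "idx (ty P)"])
  then show ?thesis
    unfolding sum_lop_kronecker[OF P] .
qed

end

context
  fixes P :: nat and X Y Z :: "'c field" and t :: sttype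
  assumes P: "P \<in> {1..J}"
    and X_smooth: "smooth_field (U \<times> UNIV) (0, 0, 0, 0, 1, 0) X"
    and Y_smooth: "smooth_field (U \<times> UNIV) (ty P) Y"
    and Z_smooth: "smooth_field (U \<times> UNIV) t Z"
begin

lemma X_component_smooth: "j \<in> tn_range \<Longrightarrow> smooth_on (U \<times> UNIV) (\<lambda>q. X q (vidx j))"
  using X_smooth unfolding smooth_field_def by (auto simp: vidx_def tn_range_def)

lemma Y_component_smooth: "I \<in> idx (ty P) \<Longrightarrow> smooth_on (U \<times> UNIV) (\<lambda>q. Y q I)"
  using Y_smooth unfolding smooth_field_def by blast

lemma Z_component_smooth: "I \<in> idx t \<Longrightarrow> smooth_on (U \<times> UNIV) (\<lambda>q. Z q I)"
  using Z_smooth unfolding smooth_field_def by blast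

lemma nabla_nvec_expand:
  assumes p: "p \<in> U \<times> UNIV" and I: "I \<in> idx t"
  shows "nabla X (nvec crd ty P Y Z) p I
    = (\<Sum>j\<in>tn_range. X p (vidx j) * (\<Sum>I'\<in>idx (ty P).
         hor_der j (\<lambda>q. Y q I') p * wirt (\<lambda>q. Z q I) (crd P I') p
       + Y p I' * (hor_der j (wirt (\<lambda>q. Z q I) (crd P I')) p
                   + lop (cA j p) (cAb j p) (cG j p) (\<lambda>I''. wirt (\<lambda>q. Z q I'') (crd P I') p) I)))"
  unfolding nablaX_eq
proof (intro sum.cong refl arg_cong2[where f = "(*)"])
  fix j assume j: "j \<in> tn_range"
  have "hor_der j (\<lambda>q. nvec crd ty P Y Z q I) p
     = (\<Sum>I'\<in>idx (ty P). hor_der j (\<lambda>q. Y q I') p * wirt (\<lambda>q. Z q I) (crd P I') p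
         + Y p I' * hor_der j (wirt (\<lambda>q. Z q I) (crd P I')) p)"
    unfolding nvec_def
    by (simp add: derivation_sum[OF point_derivation_hor_der[OF p j]]
        derivation_mult[OF point_derivation_hor_der[OF p j]]
        smooth_on_imp_differentiable[OF Y_component_smooth p]
        wirt_differentiable[OF Z_component_smooth[OF I] p])
  moreover have "Lf (cA j) (cAb j) (cG j) (nvec crd ty P Y Z) p I
     = (\<Sum>I'\<in>idx (ty P). Y p I' * lop (cA j p) (cAb j p) (cG j p) (\<lambda>I''. wirt (\<lambda>q. Z q I'') (crd P I') p) I)"
    unfolding Lf_def nvec_def by (simp add: lop_sum lop_cmult)
  ultimately show "hor_der j (\<lambda>q. nvec crd ty P Y Z q I) p + Lf (cA j) (cAb j) (cG j) (nvec crd ty P Y Z) p I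
     = (\<Sum>I'\<in>idx (ty P). hor_der j (\<lambda>q. Y q I') p * wirt (\<lambda>q. Z q I) (crd P I') p
       + Y p I' * (hor_der j (wirt (\<lambda>q. Z q I) (crd P I')) p
                   + lop (cA j p) (cAb j p) (cG j p) (\<lambda>I''. wirt (\<lambda>q. Z q I'') (crd P I') p) I))"
    by (simp add: sum.distrib distrib_left add.assoc)
qed

lemma nvec_nabla_expand:
  assumes p: "p \<in> U \<times> UNIV" and I: "I \<in> idx t"
  shows "nvec crd ty P Y (nabla X Z) p I
    = nabla (nvec crd ty P Y X) Z p I
    + (\<Sum>j\<in>tn_range. X p (vidx j) * (\<Sum>I'\<in>idx (ty P). Y p I' *
         (wirt (\<lambda>q. hor_der j (\<lambda>q. Z q I) q) (crd P I') p + lop_wirt j (crd P I') p (Z p) I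
          + lop (cA j p) (cAb j p) (cG j p) (\<lambda>I''. wirt (\<lambda>q. Z q I'') (crd P I') p) I)))"
proof -
  have "nvec crd ty P Y (nabla X Z) p I
    = (\<Sum>I'\<in>idx (ty P). Y p I' * (\<Sum>j\<in>tn_range.
          wirt (\<lambda>q. X q (vidx j)) (crd P I') p * (hor_der j (\<lambda>q. Z q I) p + Lf (cA j) (cAb j) (cG j) Z p I)
        + X p (vidx j) * (wirt (\<lambda>q. hor_der j (\<lambda>q. Z q I) q) (crd P I') p + lop_wirt j (crd P I') p (Z p) I
          + lop (cA j p) (cAb j p) (cG j p) (\<lambda>I''. wirt (\<lambda>q. Z q I'') (crd P I') p) I)))"
    unfolding nvec_def nablaX_eq
    by (simp add: derivation_sum[OF point_derivation_wirt] derivation_mult[OF point_derivation_wirt]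
        derivation_add[OF point_derivation_wirt] smooth_on_imp_differentiable[OF X_component_smooth p]
        hor_der_differentiable[OF p _ Z_component_smooth[OF I]] Lf_differentiable[OF p _ Z_smooth I]
        wirt_Lf[OF p _ Z_smooth I] add.assoc)
  moreover have "nabla (nvec crd ty P Y X) Z p I
    = (\<Sum>j\<in>tn_range. (\<Sum>I'\<in>idx (ty P). Y p I' * wirt (\<lambda>q. X q (vidx j)) (crd P I') p)
         * (hor_der j (\<lambda>q. Z q I) p + Lf (cA j) (cAb j) (cG j) Z p I))"
    unfolding nvec_def nablaX_eq ..
  ultimately show ?thesis
    by (simp add: distrib_left sum.distrib sum_distrib_left sum_distrib_right mult.assoc mult.left_commute
        sum.swap[of _ "idx (ty P)"])
qed

lemma commutator_at:
  assumes p: "p \<in> U \<times> UNIV" and I: "I \<in> idx t"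
  shows "nabla X (nvec crd ty P Y Z) p I - nvec crd ty P Y (nabla X Z) p I
    = nvec crd ty P (nabla X Y) Z p I
    + (\<Sum>Q\<in>{1..J}. nvec crd ty Q (\<lambda>p I. - conn_variation_action X Y P (Sfield crd Q) p I) Z p I)
    + (\<Sum>Q\<in>{1..J}. nbar crd ty Q (\<lambda>p I. - conn_variation_action X Y P (tauF (Sfield crd Q)) p I) Z p I)
    - nabla (nvec crd ty P Y X) Z p I
    + conn_variation_action X Y P Z p I"
proof -
  define f where "f = (\<lambda>q. Z q I)"
  define x where "x = (\<lambda>j. X p (vidx j))"
  define L where "L = (\<lambda>j. lop (cA j p) (cAb j p) (cG j p))"
  define S where "S = (\<lambda>j. \<Sum>Q\<in>{1..J}. \<Sum>I'\<in>idx (ty Q).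
         (\<Sum>I''\<in>idx (ty P). Y p I'' * lop_wirt j (crd P I'') p (Sfield crd Q p) I') * wirt f (crd Q I') p)"
  define T where "T = (\<lambda>j. \<Sum>Q\<in>{1..J}. \<Sum>I'\<in>idx (tauty (ty Q)).
         (\<Sum>I''\<in>idx (ty P). Y p I'' * lop_wirt j (crd P I'') p (tauF (Sfield crd Q) p) I') * wirtb f (crd Q (swapidx I')) p)"
  define N where "N = (\<lambda>j. \<Sum>I'\<in>idx (ty P). Y p I' * lop_wirt j (crd P I') p (Z p) I)"
  define A where "A = (\<lambda>j. \<Sum>I'\<in>idx (ty P). hor_der j (\<lambda>q. Y q I') p * wirt f (crd P I') p
       + Y p I' * (hor_der j (wirt f (crd P I')) p + L j (\<lambda>I''. wirt (\<lambda>q. Z q I'') (crd P I') p) I))"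
  define B where "B = (\<lambda>j. \<Sum>I'\<in>idx (ty P). Y p I' * (wirt (\<lambda>q. hor_der j f q) (crd P I') p
       + lop_wirt j (crd P I') p (Z p) I + L j (\<lambda>I''. wirt (\<lambda>q. Z q I'') (crd P I') p) I))"
  define R where "R = (\<lambda>j. (\<Sum>I'\<in>idx (ty P). (hor_der j (\<lambda>q. Y q I') p + L j (Y p) I') * wirt f (crd P I') p)
       + S j + T j - N j)"
  have f: "smooth_on (U \<times> UNIV) f"
    unfolding f_def by (rule Z_component_smooth[OF I])
  have commutator: "A j - B j = R j" if j: "j \<in> tn_range" for j
    using hor_der_commutator_contracted[OF p j P f, of "Y p"]
    unfolding A_def B_def R_def S_def T_def N_def L_def
    by (simp add: sum.distrib sum_subtractf distrib_left distrib_right right_diff_distrib algebra_simps)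
  have "nabla X (nvec crd ty P Y Z) p I - nvec crd ty P Y (nabla X Z) p I
    = (\<Sum>j\<in>tn_range. x j * A j) - (nabla (nvec crd ty P Y X) Z p I + (\<Sum>j\<in>tn_range. x j * B j))"
    unfolding nabla_nvec_expand[OF p I] nvec_nabla_expand[OF p I] A_def B_def x_def L_def f_def ..
  also have "\<dots> = (\<Sum>j\<in>tn_range. x j * (A j - B j)) - nabla (nvec crd ty P Y X) Z p I"
    by (simp add: right_diff_distrib sum_subtractf algebra_simps)
  also have "\<dots> = (\<Sum>j\<in>tn_range. x j * R j) - nabla (nvec crd ty P Y X) Z p I"
    using commutator by simp
  finally have lhs: "nabla X (nvec crd ty P Y Z) p I - nvec crd ty P Y (nabla X Z) p I
    = (\<Sum>j\<in>tn_range. x j * R j) - nabla (nvec crd ty P Y X) Z p I" .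
  have "conn_variation_action X Y P Z p I = - (\<Sum>j\<in>tn_range. x j * N j)"
    unfolding conn_variation_action_eq N_def x_def ..
  then show ?thesis
    unfolding lhs R_def nvec_nabla_eq nvec_conn_variation_action_Sfield nbar_conn_variation_action_tau_Sfield
      x_def L_def S_def T_def f_def
    by (simp add: distrib_left right_diff_distrib sum.distrib sum_subtractf)
qed

end

end

theorem mainTheorem7:
  fixes J :: nat and ty :: "nat \<Rightarrow> sttype"
    and crd :: "nat \<Rightarrow> stidx \<Rightarrow> 'c::finite"
    and U :: "(real ^ 4) set"
    and Ups :: "nat \<Rightarrow> nat \<Rightarrow> real ^ 4 \<Rightarrow> real"
    and cA cAb cG :: "nat \<Rightarrow> 'c pt \<Rightarrow> cmat"
    and P :: nat and X Y Z :: "'c field" and tz :: sttype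
  assumes crd_bij: "bij_betw (\<lambda>(Q, I). crd Q I) {(Q, I). Q \<in> {1..J} \<and> I \<in> idx (ty Q)} UNIV"
    and U_open: "open U"
    and Ups_smooth: "\<forall>k\<in>tn_range. \<forall>j\<in>tn_range. smooth_on U (Ups k j)"
    and Ups_frame: "\<forall>x\<in>U. \<forall>c :: nat \<Rightarrow> real.
                      (\<forall>k\<in>tn_range. (\<Sum>j\<in>tn_range. c j * Ups k j x) = 0) \<longrightarrow> (\<forall>j\<in>tn_range. c j = 0)"
    and conn_smooth: "\<forall>j\<in>tn_range. \<forall>k i. smooth_on (U \<times> UNIV) (\<lambda>q. cA j q k i)
                         \<and> smooth_on (U \<times> UNIV) (\<lambda>q. cAb j q k i) \<and> smooth_on (U \<times> UNIV) (\<lambda>q. cG j q k i)"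
    and P_range: "P \<in> {1..J}"
    and X_smooth: "smooth_field (U \<times> UNIV) (0, 0, 0, 0, 1, 0) X"
    and Y_smooth: "smooth_field (U \<times> UNIV) (ty P) Y"
    and Z_smooth: "smooth_field (U \<times> UNIV) tz Z"
  shows
   "let nab = nablaX J ty crd Ups cA cAb cG;
        Np  = (\<lambda>p k i. - (\<Sum>j\<in>tn_range. \<Sum>I\<in>idx (ty P).
                    X p (vidx j) * Y p I * wirt (\<lambda>q. cA j q k i) (crd P I) p));
        Nbp = (\<lambda>p k i. - (\<Sum>j\<in>tn_range. \<Sum>I\<in>idx (ty P).
                    X p (vidx j) * Y p I * wirt (\<lambda>q. cAb j q k i) (crd P I) p));
        Ngp = (\<lambda>p k i. - (\<Sum>j\<in>tn_range. \<Sum>I\<in>idx (ty P).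
                    X p (vidx j) * Y p I * wirt (\<lambda>q. cG j q k i) (crd P I) p));
        UQ  = (\<lambda>Q p I. - Lf Np Nbp Ngp (Sfield crd Q) p I);
        UbQ = (\<lambda>Q p I. - Lf Np Nbp Ngp (tauF (Sfield crd Q)) p I);
        Uf  = nab X Y;
        Vf  = nvec crd ty P Y X
    in \<forall>p\<in>U \<times> UNIV. \<forall>I\<in>idx tz.
         nab X (nvec crd ty P Y Z) p I - nvec crd ty P Y (nab X Z) p I
       = nvec crd ty P Uf Z p I
         + (\<Sum>Q\<in>{1..J}. nvec crd ty Q (UQ Q) Z p I)
         + (\<Sum>Q\<in>{1..J}. nbar crd ty Q (UbQ Q) Z p I)
         - nab Vf Z p I
         + Lf Np Nbp Ngp Z p I"
proof -
  interpret spinor_chart J ty crd U Ups cA cAb cG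
    using crd_bij U_open Ups_smooth conn_smooth
    by unfold_locales (auto dest: bij_betw_imp_inj_on)
  show ?thesis
    unfolding Let_def
    using commutator_at[OF P_range X_smooth Y_smooth Z_smooth]
    unfolding conn_variation_def[abs_def] by blast
qed

end
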